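(* Let $X$ be a non-empty finite set and $\mathcal{P}$ a partition of $X$ with distinct block sizes $l_1<\cdots<l_r$. Let $U$ be a set containing one element of $\mathcal{B}_i$ for each $i\le r-1$, and one element of $\mathcal{C}_i$ for each $i\in\{1,\ldots,r\}$ such that either $i=1$ and $l_1\ge 2$, or $i\ge 2$ and $l_i-l_{i-1}\ge 2$. Then $\Sigma(X,\mathcal{P})$ is generated as a semigroup by $S(X,\mathcal{P})\cup U$.
   Context: $T(X,\mathcal{P})$ is the semigroup (under composition) of maps $f:X\to X$ mapping each block of $\mathcal{P}$ into some block; $S(X,\mathcal{P})$ is its group of units; $\Sigma(X,\mathcal{P})$ is the set of $f\in T(X,\mathcal{P})$ whose image intersects every block. For $i\le r-1$, $\mathcal{B}_i$ is the set of $f\in\Sigma(X,\mathcal{P})$ for which there are blocks $P_j,P_{j'},P_k,P_{k'}$ (possibly $j=j'$ or $k=k'$) with $|P_j|=|P_{j'}|=l_i$, $|P_k|=|P_{k'}|=l_{i+1}$, such that $f$ maps $P_j$ injectively into $P_k$, maps $P_{k'}$ onto $P_{j'}$, and maps every other block bijectively onto a block of the same size. For $i\le r$, $\mathcal{C}_i$ is the set of $f\in\Sigma(X,\mathcal{P})$ mapping each block into a block of the same size, such that one block of size $l_i$ has image of size $l_i-1$ and all other blocks are mapped injectively. *)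

theory Defs
  imports Main "HOL-Library.FuncSet" "HOL-Library.Disjoint_Sets"
begin

text \<open>Maps X -> X are represented as extensional functions (value undefined outside X);
  composition is FuncSet's compose X.\<close>

definition T_map :: "'a set \<Rightarrow> 'a set set \<Rightarrow> ('a \<Rightarrow> 'a) set" where
  "T_map X P = {f \<in> X \<rightarrow>\<^sub>E X. \<forall>B\<in>P. \<exists>C\<in>P. f ` B \<subseteq> C}"

definition S_map :: "'a set \<Rightarrow> 'a set set \<Rightarrow> ('a \<Rightarrow> 'a) set" where
  "S_map X P = {f \<in> T_map X P. \<exists>g\<in>T_map X P.
      compose X f g = restrict id X \<and> compose X g f = restrict id X}"

definition Sigma_map :: "'a set \<Rightarrow> 'a set set \<Rightarrow> ('a \<Rightarrow> 'a) set" where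
  "Sigma_map X P = {f \<in> T_map X P. \<forall>B\<in>P. f ` X \<inter> B \<noteq> {}}"

text \<open>Number of distinct block sizes, and the i-th smallest block size (1-based).\<close>
definition num_sizes :: "'a set set \<Rightarrow> nat" where
  "num_sizes P = card (card ` P)"

definition lsize :: "'a set set \<Rightarrow> nat \<Rightarrow> nat" where
  "lsize P i = sorted_list_of_set (card ` P) ! (i - 1)"

definition B_set :: "'a set \<Rightarrow> 'a set set \<Rightarrow> nat \<Rightarrow> ('a \<Rightarrow> 'a) set" where
  "B_set X P i = {f \<in> Sigma_map X P. \<exists>Pj\<in>P. \<exists>Pj'\<in>P. \<exists>Pk\<in>P. \<exists>Pk'\<in>P.
      card Pj = lsize P i \<and> card Pj' = lsize P i \<and>
      card Pk = lsize P (i+1) \<and> card Pk' = lsize P (i+1) \<and>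
      inj_on f Pj \<and> f ` Pj \<subseteq> Pk \<and> f ` Pk' = Pj' \<and>
      (\<forall>Q\<in>P - {Pj, Pk'}. \<exists>R\<in>P. card R = card Q \<and> bij_betw f Q R)}"

definition C_set :: "'a set \<Rightarrow> 'a set set \<Rightarrow> nat \<Rightarrow> ('a \<Rightarrow> 'a) set" where
  "C_set X P i = {f \<in> Sigma_map X P.
      (\<forall>Q\<in>P. \<exists>R\<in>P. card R = card Q \<and> f ` Q \<subseteq> R) \<and>
      (\<exists>B\<in>P. card B = lsize P i \<and> card (f ` B) = lsize P i - 1 \<and>
         (\<forall>Q\<in>P - {B}. inj_on f Q))}"

inductive_set sgen :: "'a set \<Rightarrow> ('a \<Rightarrow> 'a) set \<Rightarrow> ('a \<Rightarrow> 'a) set" for X G where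
  gen: "g \<in> G \<Longrightarrow> g \<in> sgen X G"
| comp: "f \<in> sgen X G \<Longrightarrow> g \<in> sgen X G \<Longrightarrow> compose X f g \<in> sgen X G"

end

theory Submission
  imports Defs "HOL-Combinatorics.Transposition"
begin

(* Every f in Sigma(X,P) induces a permutation phi_f of the blocks. Two maps in Sigma(X,P) with the
   same kernel on every block and with images of the same sizes differ by a unit, so the units move
   any map to every position of the same shape. Conjugates of the element of B_i give, for blocks D, E
   of adjacent sizes l_i < l_(i+1), maps sending D injectively into E and E onto D. Composing two of
   them, or taking the element of C_i when no block has size one less, yields a map of rank defect one,
   and from it every idempotent collapsing a point onto another point of its block. Collapses and units
   generate all maps fixing every block, hence all f for which phi_f preserves block sizes. Any other
   f is a swap of two blocks of adjacent sizes followed by a map of Sigma(X,P) with smaller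
   sum over Q of (|phi_f Q| - |Q|)^2. *)

lemma bij_betw_extend_inj_on:
  assumes "finite R" "finite R'" "card R = card R'" "A \<subseteq> R" "inj_on \<rho> A" "\<rho> ` A \<subseteq> R'"
  obtains g where "bij_betw g R R'" "\<And>a. a \<in> A \<Longrightarrow> g a = \<rho> a"
proof -
  have "finite A" using assms finite_subset by blast
  then have "card (R - A) = card (R' - \<rho> ` A)"
    using assms by (simp add: card_Diff_subset card_image)
  then obtain g0 where g0: "bij_betw g0 (R - A) (R' - \<rho> ` A)"
    using finite_same_card_bij assms by (meson finite_Diff)
  define g where "g z = (if z \<in> A then \<rho> z else g0 z)" for z
  have "bij_betw g A (\<rho> ` A)"
    unfolding g_def bij_betw_def using assms(5) by (auto simp: inj_on_def)
  moreover have "bij_betw g (R - A) (R' - \<rho> ` A)"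
    using g0 unfolding g_def by (rule bij_betw_cong[THEN iffD1, rotated]) auto
  ultimately have "bij_betw g (A \<union> (R - A)) (\<rho> ` A \<union> (R' - \<rho> ` A))"
    by (rule bij_betw_combine) auto
  moreover have "A \<union> (R - A) = R" "\<rho> ` A \<union> (R' - \<rho> ` A) = R'" using assms by auto
  ultimately show ?thesis using that unfolding g_def by auto
qed

lemma card_image_lessE:
  assumes "finite S" "card (f ` S) < card S"
  obtains p p' where "p \<in> S" "p' \<in> S" "p \<noteq> p'" "f p = f p'"
  using assms inj_on_iff_eq_card unfolding inj_on_def by (metis less_irrefl)

lemma inj_on_Diff_collision:
  assumes "finite S" "card (f ` S) = card S - 1" "p \<in> S" "p' \<in> S" "p \<noteq> p'" "f p = f p'"
  shows "inj_on f (S - {p})"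
proof -
  have "f ` (S - {p}) = f ` S" using assms by auto
  then show ?thesis using assms by (simp add: inj_on_iff_eq_card)
qed

lemma inj_on_Diff_singleton_eq_iff:
  assumes "inj_on k (S - {v})" "u \<in> S" "v \<in> S" "u \<noteq> v" "k u = k v" "a \<in> S" "b \<in> S"
  shows "k a = k b \<longleftrightarrow> a = b \<or> {a, b} = {u, v}"
  using assms unfolding inj_on_def by (cases "a = v"; cases "b = v") (auto simp: doubleton_eq_iff)

lemma inj_on_image_superset:
  assumes "finite D" "finite E" "S \<subseteq> E" "card S \<le> card D" "card D \<le> card E"
  obtains \<alpha> where "inj_on \<alpha> D" "\<alpha> ` D \<subseteq> E" "S \<subseteq> \<alpha> ` D"
proof -
  have "finite S" using assms(2,3) finite_subset by blast
  have "card D - card S \<le> card (E - S)" using assms \<open>finite S\<close> by (simp add: card_Diff_subset)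
  then obtain T' where T': "T' \<subseteq> E - S" "card T' = card D - card S"
    using obtain_subset_with_card_n by metis
  then have "finite T'" using assms(2) finite_subset by blast
  then have "card (S \<union> T') = card D"
    using T' \<open>finite S\<close> assms(4) by (subst card_Un_disjoint) auto
  then obtain \<alpha> where "bij_betw \<alpha> D (S \<union> T')"
    using finite_same_card_bij[OF assms(1)] \<open>finite S\<close> \<open>finite T'\<close> by (metis finite_UnI)
  then show ?thesis using that T'(1) assms(3) unfolding bij_betw_def by blast
qed

lemma card_transpose: "card A = card B \<Longrightarrow> card (transpose A B R) = card R"
  by (simp add: transpose_def)

lemma sum_remove2:
  assumes "finite A" "a \<in> A" "b \<in> A" "a \<noteq> b"
  shows "sum g A = g a + g b + sum g (A - {a, b})"
proof -
  have "sum g A = g a + sum g (A - {a})" using sum.remove[OF assms(1,2)] .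
  also have "sum g (A - {a}) = g b + sum g (A - {a} - {b})"
    using sum.remove[of "A - {a}" b] assms by auto
  finally show ?thesis by (simp add: Diff_insert2[symmetric] add.assoc)
qed

lemma sum_squares_exchange_less:
  fixes d e q r :: int
  assumes "d < e" "q < r"
  shows "(d - q)^2 + (e - r)^2 < (e - q)^2 + (d - r)^2"
proof -
  have "(e - q)^2 + (d - r)^2 - ((d - q)^2 + (e - r)^2) = 2 * ((e - d) * (r - q))"
    by (simp add: power2_eq_square algebra_simps)
  moreover have "0 < (e - d) * (r - q)" using assms by simp
  ultimately show ?thesis by linarith
qed

lemma bij_betw_weight_increase:
  fixes w :: "'b \<Rightarrow> nat"
  assumes "finite P" "bij_betw \<phi> P P" "\<exists>Q\<in>P. w (\<phi> Q) \<noteq> w Q"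
  obtains Q where "Q \<in> P" "w Q < w (\<phi> Q)"
proof -
  have "\<not> (\<forall>Q\<in>P. w (\<phi> Q) \<le> w Q)"
  proof
    assume le: "\<forall>Q\<in>P. w (\<phi> Q) \<le> w Q"
    moreover have "\<exists>Q\<in>P. w (\<phi> Q) < w Q" using assms(3) le by (meson le_neq_implies_less)
    ultimately have "(\<Sum>Q\<in>P. w (\<phi> Q)) < (\<Sum>Q\<in>P. w Q)"
      by (rule sum_strict_mono_ex1[OF assms(1)])
    moreover have "(\<Sum>Q\<in>P. w (\<phi> Q)) = (\<Sum>Q\<in>P. w Q)"
      using sum.reindex_bij_betw[OF assms(2)] .
    ultimately show False by simp
  qed
  then show ?thesis using that by force
qed

text \<open>The inequality between the weights of Q and of the image of R is what later lets the image of
  the block Q fit into the block onto which R is mapped.\<close>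

lemma bij_betw_adjacent_exchange:
  fixes w :: "'b \<Rightarrow> nat"
  assumes fin: "finite P" and \<phi>: "bij_betw \<phi> P P" and moved: "\<exists>Q\<in>P. w (\<phi> Q) \<noteq> w Q"
  obtains Q R where "Q \<in> P" "R \<in> P" "w Q < w R" "w Q \<le> w (\<phi> R)" "w (\<phi> R) < w (\<phi> Q)"
    "\<And>Z. Z \<in> P \<Longrightarrow> \<not> (w (\<phi> R) < w Z \<and> w Z < w (\<phi> Q))"
proof -
  obtain Q0 where "Q0 \<in> P" "w Q0 < w (\<phi> Q0)" using bij_betw_weight_increase[OF assms] .
  \<comment> \<open>Q increases its weight to the least possible value e; if no element heavier than Q were
    mapped onto the level d just below e, that level would be mapped onto itself.\<close>
  then obtain Q where Q: "Q \<in> P" "w Q < w (\<phi> Q)"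
    and Q_min: "\<And>Z. Z \<in> P \<Longrightarrow> w Z < w (\<phi> Z) \<Longrightarrow> w (\<phi> Q) \<le> w (\<phi> Z)"
    using ex_has_least_nat[of "\<lambda>Z. Z \<in> P \<and> w Z < w (\<phi> Z)" Q0 "\<lambda>Z. w (\<phi> Z)"] by blast
  define e where "e = w (\<phi> Q)"
  define L where "L = {w Z |Z. Z \<in> P \<and> w Z < e}"
  define d where "d = Max L"
  have "finite L" using fin unfolding L_def by simp
  moreover have "w Q \<in> L" using Q unfolding L_def e_def by blast
  ultimately have "d \<in> L" "w Q \<le> d" unfolding d_def using Max_in Max_ge by blast+
  then obtain D where D: "D \<in> P" "w D = d" "d < e" unfolding L_def by blast
  have below_e: "w Z \<le> d" if "Z \<in> P" "w Z < e" for Z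
    using Max_ge[OF \<open>finite L\<close>] that unfolding d_def L_def by blast
  have level_d: "d \<le> w R" if "R \<in> P" "w (\<phi> R) = d" for R
  proof (rule ccontr)
    assume "\<not> d \<le> w R"
    then have "e \<le> d" using Q_min[OF that(1)] that(2) unfolding e_def by simp
    then show False using D(3) by simp
  qed
  have "\<exists>R\<in>P. w (\<phi> R) = d \<and> w Q < w R"
  proof (rule ccontr)
    assume none: "\<not> ?thesis"
    have stay: "w R = d" if "R \<in> P" "w (\<phi> R) = d" for R
    proof -
      have "\<not> w Q < w R" using none that by blast
      then show ?thesis using level_d[OF that] \<open>w Q \<le> d\<close> by linarith
    qed
    define W where "W = {Z\<in>P. w Z = d}"
    have "W \<subseteq> \<phi> ` W"
    proof
      fix Z assume Z: "Z \<in> W"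
      then have "Z \<in> \<phi> ` P" using \<phi> unfolding W_def bij_betw_def by simp
      then obtain R where R: "R \<in> P" "Z = \<phi> R" by blast
      then have "R \<in> W" using stay[OF R(1)] Z unfolding W_def by simp
      then show "Z \<in> \<phi> ` W" using R(2) by blast
    qed
    moreover have "finite W" using fin unfolding W_def by simp
    ultimately have W_fixed: "W = \<phi> ` W" using card_seteq card_image_le by blast
    have "D \<in> \<phi> ` P" using \<phi> D(1) unfolding bij_betw_def by simp
    then obtain R0 where R0: "R0 \<in> P" "\<phi> R0 = D" by blast
    then have "w (\<phi> R0) = d" using D(2) by simp
    then have "w R0 = d" "\<not> w Q < w R0" using stay[OF R0(1)] none R0(1) by blast+
    then have "Q \<in> W" using \<open>w Q \<le> d\<close> Q(1) unfolding W_def by simp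
    then have "\<phi> Q \<in> \<phi> ` W" by (rule imageI)
    then have "\<phi> Q \<in> W" using W_fixed[symmetric] by simp
    then have "w (\<phi> Q) = d" unfolding W_def by simp
    then show False using D(3) unfolding e_def by simp
  qed
  then obtain R where R: "R \<in> P" "w (\<phi> R) = d" "w Q < w R" by blast
  show ?thesis
  proof (rule that[OF Q(1) R(1) R(3)])
    show "w Q \<le> w (\<phi> R)" "w (\<phi> R) < w (\<phi> Q)" using R(2) \<open>w Q \<le> d\<close> D(3) unfolding e_def by auto
    show "\<not> (w (\<phi> R) < w Z \<and> w Z < w (\<phi> Q))" if "Z \<in> P" for Z
      using below_e[OF that] R(2) unfolding e_def by fastforce
  qed
qed

section \<open>Sorted block sizes\<close>

lemma sorted_list_of_set_adjacent:
  fixes S :: "'b::linorder set"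
  assumes "finite S" "a \<in> S" "b \<in> S" "a < b" "\<And>z. z \<in> S \<Longrightarrow> \<not> (a < z \<and> z < b)"
  obtains j where "Suc j < card S" "sorted_list_of_set S ! j = a" "sorted_list_of_set S ! Suc j = b"
proof -
  define L where "L = sorted_list_of_set S"
  have L: "set L = S" "sorted_wrt (<) L" "length L = card S"
    unfolding L_def using assms(1) by auto
  obtain j j' where j: "j < length L" "L ! j = a" and j': "j' < length L" "L ! j' = b"
    using assms(2,3) L(1) by (metis in_set_conv_nth)
  have "j < j'" using j j' assms(4) L(2) by (metis linorder_neqE_nat order_less_asym sorted_wrt_nth_less)
  have "j' = Suc j"
  proof (rule ccontr)
    assume "j' \<noteq> Suc j"
    then have "Suc j < j'" using \<open>j < j'\<close> by simp
    then have "a < L ! Suc j" "L ! Suc j < b" "L ! Suc j \<in> S"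
      using j j' L(1,2) by (auto simp: sorted_wrt_nth_less)
    then show False using assms(5) by blast
  qed
  then show ?thesis using that j j' L(3) unfolding L_def by simp
qed

lemma lsize_adjacent:
  assumes "finite P" "D \<in> P" "E \<in> P" "card D < card E"
    "\<And>Z. Z \<in> P \<Longrightarrow> \<not> (card D < card Z \<and> card Z < card E)"
  obtains i where "1 \<le> i" "i \<le> num_sizes P - 1" "lsize P i = card D" "lsize P (i + 1) = card E"
proof -
  obtain j where "Suc j < card (card ` P)" "sorted_list_of_set (card ` P) ! j = card D"
    "sorted_list_of_set (card ` P) ! Suc j = card E"
    using sorted_list_of_set_adjacent[of "card ` P" "card D" "card E"] assms by blast
  then show ?thesis using that[of "Suc j"] unfolding num_sizes_def lsize_def by simp
qed

definition collapse_indices :: "'a set set \<Rightarrow> nat set" where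
  "collapse_indices P = {i. 1 \<le> i \<and> i \<le> num_sizes P \<and>
     ((i = 1 \<and> lsize P 1 \<ge> 2) \<or> (i \<ge> 2 \<and> lsize P i - lsize P (i - 1) \<ge> 2))}"

lemma collapse_indices_witness:
  assumes "finite P" "B \<in> P" "card B \<ge> 2" "\<And>Z. Z \<in> P \<Longrightarrow> card Z \<noteq> card B - 1"
  obtains i where "i \<in> collapse_indices P" "lsize P i = card B"
proof -
  define L where "L = sorted_list_of_set (card ` P)"
  have L: "set L = card ` P" "sorted_wrt (<) L" "length L = num_sizes P"
    unfolding L_def num_sizes_def using assms(1) by auto
  obtain j where j: "j < length L" "L ! j = card B"
    using assms(2) L(1) by (metis imageI in_set_conv_nth)
  have "Suc j \<in> collapse_indices P"
  proof (cases j)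
    case 0
    then show ?thesis using j assms(3) L(3) unfolding collapse_indices_def lsize_def L_def by simp
  next
    case (Suc k)
    have "L ! k < card B" "L ! k \<in> card ` P"
      using j Suc L(1) sorted_wrt_nth_less[OF L(2), of k "Suc k"] by auto
    then have "card B - L ! k \<ge> 2" using assms(4) by force
    then show ?thesis using j Suc L(3) unfolding collapse_indices_def lsize_def L_def by simp
  qed
  moreover have "lsize P (Suc j) = card B" using j unfolding lsize_def L_def by simp
  ultimately show ?thesis using that by blast
qed

section \<open>Maps compatible with a partition\<close>

locale block_partition =
  fixes X :: "'a set" and P :: "'a set set"
  assumes finite_X: "finite X" and partition: "partition_on X P"
begin

lemma finite_P: "finite P"
  using finite_elements[OF finite_X partition] .

lemma Union_P: "\<Union>P = X"
  using partition_onD1[OF partition] by simp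

lemma block_nonempty: "B \<in> P \<Longrightarrow> B \<noteq> {}"
  using partition_onD3[OF partition] by auto

lemma block_subset: "B \<in> P \<Longrightarrow> B \<subseteq> X"
  using Union_P by auto

lemma finite_block: "B \<in> P \<Longrightarrow> finite B"
  using block_subset finite_X finite_subset by blast

lemma block_eqI: "B \<in> P \<Longrightarrow> C \<in> P \<Longrightarrow> x \<in> B \<Longrightarrow> x \<in> C \<Longrightarrow> B = C"
  using partition_onD2[OF partition] by (auto simp: disjoint_def)

definition block_of :: "'a \<Rightarrow> 'a set" where
  "block_of x = (THE B. B \<in> P \<and> x \<in> B)"

lemma block_of_eq: "B \<in> P \<Longrightarrow> x \<in> B \<Longrightarrow> block_of x = B"
  unfolding block_of_def by (rule the_equality) (auto dest: block_eqI)

lemma block_of_in_P: "x \<in> X \<Longrightarrow> block_of x \<in> P"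
  and in_block_of: "x \<in> X \<Longrightarrow> x \<in> block_of x"
  using Union_P block_of_eq by auto

lemma T_map_into: "f \<in> T_map X P \<Longrightarrow> x \<in> X \<Longrightarrow> f x \<in> X"
  unfolding T_map_def by auto

lemma Sigma_map_T_map: "f \<in> Sigma_map X P \<Longrightarrow> f \<in> T_map X P"
  unfolding Sigma_map_def by auto

lemma Sigma_mapI:
  assumes f: "f \<in> X \<rightarrow>\<^sub>E X" and \<psi>: "bij_betw \<psi> P P" and sub: "\<And>Q. Q \<in> P \<Longrightarrow> f ` Q \<subseteq> \<psi> Q"
  shows "f \<in> Sigma_map X P"
proof -
  have "f ` X \<inter> C \<noteq> {}" if "C \<in> P" for C
  proof -
    have "C \<in> \<psi> ` P" using \<psi> that unfolding bij_betw_def by simp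
    then obtain Q where Q: "Q \<in> P" "\<psi> Q = C" by blast
    obtain z where z: "z \<in> Q" using block_nonempty[OF Q(1)] by blast
    have "f z \<in> C" using sub[OF Q(1)] z Q(2) by blast
    moreover have "f z \<in> f ` X" using block_subset[OF Q(1)] z by blast
    ultimately show ?thesis by blast
  qed
  moreover have "\<exists>C\<in>P. f ` Q \<subseteq> C" if "Q \<in> P" for Q
    using sub[OF that] bij_betwE[OF \<psi>] that by blast
  ultimately show ?thesis using f unfolding Sigma_map_def T_map_def by blast
qed

definition block_map :: "('a \<Rightarrow> 'a) \<Rightarrow> 'a set \<Rightarrow> 'a set" where
  "block_map f Q = block_of (f (SOME z. z \<in> Q))"

lemma block_of_apply:
  assumes "f \<in> T_map X P" "Q \<in> P" "z \<in> Q"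
  shows "block_of (f z) = block_map f Q"
proof -
  obtain C where C: "C \<in> P" "f ` Q \<subseteq> C" using assms unfolding T_map_def by auto
  have "(SOME z. z \<in> Q) \<in> Q" using assms(3) by (rule someI)
  then have "f z \<in> C" "f (SOME z. z \<in> Q) \<in> C" using C(2) assms(3) by auto
  then show ?thesis unfolding block_map_def using block_of_eq[OF C(1)] by simp
qed

lemma apply_in_block_map: "f \<in> T_map X P \<Longrightarrow> Q \<in> P \<Longrightarrow> z \<in> Q \<Longrightarrow> f z \<in> block_map f Q"
  using block_of_apply in_block_of T_map_into block_subset by (metis subsetD)

lemma block_map_in_P:
  assumes "f \<in> T_map X P" "Q \<in> P"
  shows "block_map f Q \<in> P"
proof -
  obtain z where z: "z \<in> Q" using block_nonempty[OF assms(2)] by blast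
  then have "block_of (f z) \<in> P"
    using block_of_in_P T_map_into[OF assms(1)] block_subset[OF assms(2)] by blast
  then show ?thesis using block_of_apply[OF assms z] by simp
qed

lemma image_subset_block_map: "f \<in> T_map X P \<Longrightarrow> Q \<in> P \<Longrightarrow> f ` Q \<subseteq> block_map f Q"
  using apply_in_block_map by blast

lemma block_map_eqI:
  assumes "f \<in> T_map X P" "Q \<in> P" "C \<in> P" "f ` Q \<subseteq> C"
  shows "block_map f Q = C"
proof -
  obtain z where z: "z \<in> Q" using block_nonempty[OF assms(2)] by blast
  then have "block_of (f z) = C" using block_of_eq[OF assms(3)] assms(4) by blast
  then show ?thesis using block_of_apply[OF assms(1,2) z] by simp
qed

lemma bij_betw_block_map:
  assumes "f \<in> Sigma_map X P"
  shows "bij_betw (block_map f) P P"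
proof -
  have T: "f \<in> T_map X P" using assms by (rule Sigma_map_T_map)
  have "P \<subseteq> block_map f ` P"
  proof
    fix C assume C: "C \<in> P"
    then obtain z where z: "z \<in> X" "f z \<in> C" using assms unfolding Sigma_map_def by blast
    then have "block_map f (block_of z) = C"
      using block_of_apply[OF T block_of_in_P in_block_of] block_of_eq[OF C] by metis
    then show "C \<in> block_map f ` P" using block_of_in_P[OF z(1)] by blast
  qed
  moreover have "block_map f ` P \<subseteq> P" using block_map_in_P[OF T] by blast
  ultimately show ?thesis
    using finite_surj_inj[OF finite_P] unfolding bij_betw_def by blast
qed

lemma Sigma_map_reflects_block:
  assumes "f \<in> Sigma_map X P" "z1 \<in> X" "z2 \<in> X" "block_of (f z1) = block_of (f z2)"
  shows "block_of z1 = block_of z2"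
proof -
  have T: "f \<in> T_map X P" using assms(1) by (rule Sigma_map_T_map)
  have "block_map f (block_of z1) = block_map f (block_of z2)"
    using block_of_apply[OF T block_of_in_P in_block_of] assms by metis
  then show ?thesis
    using bij_betw_block_map[OF assms(1)] block_of_in_P assms(2,3) unfolding bij_betw_def inj_on_def by blast
qed

lemma compose_Sigma_map:
  assumes "f \<in> Sigma_map X P" "g \<in> Sigma_map X P"
  shows "compose X f g \<in> Sigma_map X P"
proof (rule Sigma_mapI)
  have T: "f \<in> T_map X P" "g \<in> T_map X P" using assms Sigma_map_T_map by auto
  show "compose X f g \<in> X \<rightarrow>\<^sub>E X"
    using T_map_into[OF T(1)] T_map_into[OF T(2)] by (simp add: PiE_iff compose_eq)
  show "bij_betw (block_map f \<circ> block_map g) P P"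
    using bij_betw_block_map assms bij_betw_trans by blast
  show "compose X f g ` Q \<subseteq> (block_map f \<circ> block_map g) Q" if Q: "Q \<in> P" for Q
  proof
    fix y assume "y \<in> compose X f g ` Q"
    then obtain z where z: "z \<in> Q" "y = f (g z)" using block_subset[OF Q] by (auto simp: compose_eq)
    then show "y \<in> (block_map f \<circ> block_map g) Q"
      using apply_in_block_map[OF T(2) Q] apply_in_block_map[OF T(1) block_map_in_P[OF T(2) Q]] by simp
  qed
qed


lemma Sigma_map_extensional: "f \<in> Sigma_map X P \<Longrightarrow> f \<in> extensional X"
  unfolding Sigma_map_def T_map_def by (auto simp: PiE_iff)

lemma S_map_T_map: "s \<in> S_map X P \<Longrightarrow> s \<in> T_map X P"
  unfolding S_map_def by blast

lemma S_map_bij_betw: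
  assumes "s \<in> S_map X P"
  shows "bij_betw s X X"
proof -
  obtain g where g: "g \<in> T_map X P" "compose X s g = restrict id X" "compose X g s = restrict id X"
    using assms unfolding S_map_def by blast
  have "inj_on s X"
  proof (rule inj_onI)
    fix x y assume "x \<in> X" "y \<in> X" "s x = s y"
    then show "x = y" using fun_cong[OF g(3), of x] fun_cong[OF g(3), of y] by (simp add: compose_eq)
  qed
  moreover have "y \<in> s ` X" if "y \<in> X" for y
    using fun_cong[OF g(2), of y] that T_map_into[OF g(1) that] by (force simp: compose_eq)
  ultimately show ?thesis
    using T_map_into[OF S_map_T_map[OF assms]] unfolding bij_betw_def by blast
qed

lemma S_map_Sigma_map: "s \<in> S_map X P \<Longrightarrow> s \<in> Sigma_map X P"
  using S_map_T_map S_map_bij_betw block_nonempty block_subset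
  unfolding Sigma_map_def bij_betw_def by fastforce

lemma S_mapI:
  assumes s: "s \<in> X \<rightarrow>\<^sub>E X" "bij_betw s X X" and blocks: "\<And>R. R \<in> P \<Longrightarrow> s ` R \<in> P"
  shows "s \<in> S_map X P"
proof -
  define g where "g = (\<lambda>y\<in>X. inv_into X s y)"
  have sX: "s ` X = X" using s(2) unfolding bij_betw_def by simp
  have "g \<in> X \<rightarrow>\<^sub>E X" unfolding g_def using sX by (auto intro: inv_into_into)
  moreover have "\<exists>D\<in>P. g ` C \<subseteq> D" if C: "C \<in> P" for C
  proof -
    obtain c where c: "c \<in> C" using block_nonempty[OF C] by blast
    then have "c \<in> s ` X" using block_subset[OF C] sX by auto
    then obtain x where x: "x \<in> X" "s x = c" by blast
    then have "c \<in> s ` block_of x" using in_block_of[OF x(1)] by blast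
    then have "s ` block_of x = C" using block_eqI[OF blocks[OF block_of_in_P[OF x(1)]] C _ c] by blast
    then have "g ` C \<subseteq> block_of x"
      using s(2) block_subset[OF block_of_in_P[OF x(1)]] unfolding g_def bij_betw_def
      by (auto simp: inv_into_f_f subset_iff)
    then show ?thesis using block_of_in_P[OF x(1)] by blast
  qed
  ultimately have "g \<in> T_map X P" unfolding T_map_def by blast
  moreover have "s \<in> T_map X P" using s(1) blocks unfolding T_map_def by blast
  moreover have "compose X s g = restrict id X"
    using compose_id_inv_into[OF sX] unfolding g_def by (simp add: id_def)
  moreover have "compose X g s = restrict id X"
    using compose_inv_into_id[OF s(2)] unfolding g_def by (simp add: id_def)
  ultimately show ?thesis unfolding S_map_def by blast
qed

lemma S_map_extend:
  assumes \<psi>: "bij_betw \<psi> P P" and card_\<psi>: "\<And>R. R \<in> P \<Longrightarrow> card (\<psi> R) = card R"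
    and \<rho>: "A \<subseteq> X" "inj_on \<rho> A" "\<And>a. a \<in> A \<Longrightarrow> \<rho> a \<in> \<psi> (block_of a)"
  obtains \<sigma> where "\<sigma> \<in> S_map X P" "\<And>a. a \<in> A \<Longrightarrow> \<sigma> a = \<rho> a" "\<And>R. R \<in> P \<Longrightarrow> \<sigma> ` R = \<psi> R"
proof -
  have \<psi>P: "\<psi> R \<in> P" if "R \<in> P" for R using \<psi> that bij_betwE by blast
  have local_bij: "\<forall>R\<in>P. \<exists>g. bij_betw g R (\<psi> R) \<and> (\<forall>a\<in>A \<inter> R. g a = \<rho> a)"
  proof
    fix R assume R: "R \<in> P"
    have "\<rho> ` (A \<inter> R) \<subseteq> \<psi> R" using \<rho>(3) block_of_eq[OF R] by auto
    moreover have "inj_on \<rho> (A \<inter> R)" using \<rho>(2) by (rule inj_on_subset) blast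
    ultimately obtain g where "bij_betw g R (\<psi> R)" "\<And>a. a \<in> A \<inter> R \<Longrightarrow> g a = \<rho> a"
      using bij_betw_extend_inj_on[OF finite_block[OF R] finite_block[OF \<psi>P[OF R]]
          card_\<psi>[OF R, symmetric] Int_lower2] by blast
    then show "\<exists>g. bij_betw g R (\<psi> R) \<and> (\<forall>a\<in>A \<inter> R. g a = \<rho> a)" by blast
  qed
  obtain G where G: "\<forall>R\<in>P. bij_betw (G R) R (\<psi> R) \<and> (\<forall>a\<in>A \<inter> R. G R a = \<rho> a)"
    using bchoice[OF local_bij] by blast
  define \<sigma> where "\<sigma> = (\<lambda>z\<in>X. G (block_of z) z)"
  have \<sigma>_G: "\<sigma> z = G R z" if "R \<in> P" "z \<in> R" for R z
    using that block_of_eq[OF that] block_subset[OF that(1)] unfolding \<sigma>_def by auto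
  have bij_R: "bij_betw \<sigma> R (\<psi> R)" if R: "R \<in> P" for R
    using G R bij_betw_cong[of R \<sigma> "G R" "\<psi> R"] \<sigma>_G[OF R] by blast
  have "disjoint_family_on \<psi> P"
    unfolding disjoint_family_on_def
  proof (intro ballI impI)
    fix Q R assume QR: "Q \<in> P" "R \<in> P" "Q \<noteq> R"
    then have "\<psi> Q \<noteq> \<psi> R" using inj_on_contraD[OF bij_betw_imp_inj_on[OF \<psi>]] by blast
    then show "\<psi> Q \<inter> \<psi> R = {}" using block_eqI[OF \<psi>P[OF QR(1)] \<psi>P[OF QR(2)]] by blast
  qed
  then have "bij_betw \<sigma> (\<Union>R\<in>P. R) (\<Union>R\<in>P. \<psi> R)"
    using bij_R by (rule bij_betw_UNION_disjoint)
  moreover have "(\<Union>R\<in>P. \<psi> R) = X" using \<psi> Union_P unfolding bij_betw_def by simp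
  ultimately have bij: "bij_betw \<sigma> X X" using Union_P by simp
  have img: "\<sigma> ` R = \<psi> R" if "R \<in> P" for R using bij_betw_imp_surj_on[OF bij_R[OF that]] .
  have "\<sigma> \<in> extensional X" unfolding \<sigma>_def by simp
  then have "\<sigma> \<in> X \<rightarrow>\<^sub>E X" using bij_betwE[OF bij] by (simp add: PiE_iff)
  then have "\<sigma> \<in> S_map X P" by (rule S_mapI[OF _ bij]) (simp add: img \<psi>P)
  moreover have "\<sigma> a = \<rho> a" if a: "a \<in> A" for a
  proof -
    have "a \<in> X" using a \<rho>(1) by blast
    then have "\<sigma> a = G (block_of a) a" using \<sigma>_G[OF block_of_in_P in_block_of] by blast
    also have "\<dots> = \<rho> a" using G block_of_in_P[OF \<open>a \<in> X\<close>] in_block_of[OF \<open>a \<in> X\<close>] a by blast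
    finally show ?thesis .
  qed
  ultimately show ?thesis using that img by blast
qed

lemma Sigma_map_lift:
  assumes f: "f \<in> Sigma_map X P" and \<psi>: "bij_betw \<psi> P P" and sub: "\<And>Q. Q \<in> P \<Longrightarrow> f ` Q \<subseteq> t ` \<psi> Q"
  obtains f' where "f' \<in> Sigma_map X P" "compose X t f' = f" "\<And>Q. Q \<in> P \<Longrightarrow> f' ` Q \<subseteq> \<psi> Q"
proof -
  define f' where "f' = (\<lambda>x\<in>X. SOME y. y \<in> \<psi> (block_of x) \<and> t y = f x)"
  have f': "f' x \<in> \<psi> (block_of x) \<and> t (f' x) = f x" if x: "x \<in> X" for x
  proof -
    have "f x \<in> t ` \<psi> (block_of x)" using sub[OF block_of_in_P[OF x]] in_block_of[OF x] by blast
    then have "\<exists>y. y \<in> \<psi> (block_of x) \<and> t y = f x" by (metis imageE)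
    then have "(SOME y. y \<in> \<psi> (block_of x) \<and> t y = f x) \<in> \<psi> (block_of x) \<and>
        t (SOME y. y \<in> \<psi> (block_of x) \<and> t y = f x) = f x"
      by (rule someI_ex)
    then show ?thesis unfolding f'_def using x by simp
  qed
  have sub': "f' ` Q \<subseteq> \<psi> Q" if Q: "Q \<in> P" for Q
  proof
    fix y assume "y \<in> f' ` Q"
    then obtain x where x: "x \<in> Q" "y = f' x" by blast
    then have "x \<in> X" using block_subset[OF Q] by blast
    then show "y \<in> \<psi> Q" using f'[OF \<open>x \<in> X\<close>] x block_of_eq[OF Q x(1)] by simp
  qed
  have "f' x \<in> X" if x: "x \<in> X" for x
    using f'[OF x] block_subset[OF bij_betw_apply[OF \<psi> block_of_in_P[OF x]]] by blast
  then have "f' \<in> X \<rightarrow>\<^sub>E X" unfolding f'_def by (simp add: PiE_iff)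
  then have "f' \<in> Sigma_map X P" using \<psi> sub' by (rule Sigma_mapI)
  moreover have "compose X t f' = f"
    using f' Sigma_map_extensional[OF f] by (intro extensionalityI) (auto simp: compose_eq)
  ultimately show ?thesis using that sub' by blast
qed

lemma S_map_factor_same_kernel:
  assumes h: "h \<in> Sigma_map X P" and f: "f \<in> Sigma_map X P"
    and kernel: "\<And>Q z1 z2. Q \<in> P \<Longrightarrow> z1 \<in> Q \<Longrightarrow> z2 \<in> Q \<Longrightarrow> h z1 = h z2 \<longleftrightarrow> f z1 = f z2"
    and size: "\<And>Q. Q \<in> P \<Longrightarrow> card (block_map h Q) = card (block_map f Q)"
  obtains \<sigma> where "\<sigma> \<in> S_map X P" "compose X \<sigma> h = f"
proof -
  have Th: "h \<in> T_map X P" and Tf: "f \<in> T_map X P" using h f Sigma_map_T_map by auto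
  have kernel_X: "h z1 = h z2 \<longleftrightarrow> f z1 = f z2" if z: "z1 \<in> X" "z2 \<in> X" for z1 z2
  proof (cases "block_of z1 = block_of z2")
    case True
    then have "z2 \<in> block_of z1" using in_block_of[OF z(2)] by simp
    then show ?thesis using kernel[OF block_of_in_P[OF z(1)] in_block_of[OF z(1)]] by simp
  next
    case False
    then show ?thesis using Sigma_map_reflects_block[OF h z] Sigma_map_reflects_block[OF f z] by metis
  qed
  have bij_h: "bij_betw (block_map h) P P" and bij_f: "bij_betw (block_map f) P P"
    using bij_betw_block_map h f by auto
  define \<psi> where "\<psi> = block_map f \<circ> inv_into P (block_map h)"
  have \<psi>: "bij_betw \<psi> P P"
    unfolding \<psi>_def using bij_betw_inv_into[OF bij_h] bij_f by (rule bij_betw_trans)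
  have \<psi>_h: "\<psi> (block_map h Q) = block_map f Q" if "Q \<in> P" for Q
    using bij_h that unfolding \<psi>_def bij_betw_def by (simp add: inv_into_f_f)
  have card_\<psi>: "card (\<psi> R) = card R" if R: "R \<in> P" for R
  proof -
    have "R \<in> block_map h ` P" using bij_h R unfolding bij_betw_def by simp
    then obtain Q where "Q \<in> P" "R = block_map h Q" by blast
    then show ?thesis using \<psi>_h size by simp
  qed
  define \<rho> where "\<rho> p = f (SOME z. z \<in> X \<and> h z = p)" for p
  have \<rho>_h: "\<rho> (h z) = f z" if z: "z \<in> X" for z
  proof -
    define z' where "z' = (SOME z'. z' \<in> X \<and> h z' = h z)"
    have "z' \<in> X \<and> h z' = h z"
      unfolding z'_def using z by (metis (mono_tags, lifting) someI)
    then have "f z' = f z" using kernel_X[of z' z] z by blast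
    then show ?thesis unfolding \<rho>_def z'_def[symmetric] .
  qed
  have "inj_on \<rho> (h ` X)" by (rule inj_onI) (auto simp: \<rho>_h kernel_X)
  moreover have "h ` X \<subseteq> X" using T_map_into[OF Th] by blast
  moreover have "\<rho> a \<in> \<psi> (block_of a)" if "a \<in> h ` X" for a
  proof -
    obtain z where z: "z \<in> X" "a = h z" using \<open>a \<in> h ` X\<close> by blast
    then have "\<psi> (block_of a) = block_map f (block_of z)"
      using block_of_apply[OF Th block_of_in_P in_block_of] \<psi>_h block_of_in_P by metis
    then show ?thesis using z \<rho>_h apply_in_block_map[OF Tf block_of_in_P in_block_of] by simp
  qed
  ultimately obtain \<sigma> where \<sigma>: "\<sigma> \<in> S_map X P" "\<And>a. a \<in> h ` X \<Longrightarrow> \<sigma> a = \<rho> a"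
    using S_map_extend[OF \<psi> card_\<psi>] by metis
  have "compose X \<sigma> h = f"
    using \<sigma>(2) \<rho>_h Sigma_map_extensional[OF f] by (intro extensionalityI) (auto simp: compose_eq)
  then show ?thesis using that \<sigma>(1) by blast
qed


lemma block_map_compose:
  assumes f: "f \<in> Sigma_map X P" and g: "g \<in> Sigma_map X P" and Q: "Q \<in> P"
  shows "block_map (compose X f g) Q = block_map f (block_map g Q)"
proof (rule block_map_eqI)
  have T: "f \<in> T_map X P" "g \<in> T_map X P" using f g Sigma_map_T_map by auto
  show "compose X f g \<in> T_map X P" using compose_Sigma_map[OF f g] by (rule Sigma_map_T_map)
  show "block_map f (block_map g Q) \<in> P" using block_map_in_P[OF T(1) block_map_in_P[OF T(2) Q]] .
  show "compose X f g ` Q \<subseteq> block_map f (block_map g Q)"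
  proof
    fix y assume "y \<in> compose X f g ` Q"
    then obtain z where z: "z \<in> Q" "y = f (g z)" using block_subset[OF Q] by (auto simp: compose_eq)
    then show "y \<in> block_map f (block_map g Q)"
      using apply_in_block_map[OF T(2) Q] apply_in_block_map[OF T(1) block_map_in_P[OF T(2) Q]] by simp
  qed
qed (fact Q)

definition swap_map :: "'a set \<Rightarrow> 'a set \<Rightarrow> ('a \<Rightarrow> 'a) \<Rightarrow> ('a \<Rightarrow> 'a) \<Rightarrow> 'a \<Rightarrow> 'a" where
  "swap_map D E \<alpha> \<beta> = (\<lambda>z\<in>X. if z \<in> D then \<alpha> z else if z \<in> E then \<beta> z else z)"

definition collapse :: "'a \<Rightarrow> 'a \<Rightarrow> 'a \<Rightarrow> 'a" where
  "collapse x y = (\<lambda>w\<in>X. if w = y then x else w)"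

lemma swap_map_image:
  assumes D: "D \<in> P" and E: "E \<in> P" "D \<noteq> E"
  shows "swap_map D E \<alpha> \<beta> ` D = \<alpha> ` D" and "swap_map D E \<alpha> \<beta> ` E = \<beta> ` E"
    and "C \<in> P \<Longrightarrow> C \<noteq> D \<Longrightarrow> C \<noteq> E \<Longrightarrow> swap_map D E \<alpha> \<beta> ` C = C"
proof -
  have DE: "D \<inter> E = {}" using block_eqI[OF D E(1)] E(2) by blast
  have "swap_map D E \<alpha> \<beta> z = \<alpha> z" if "z \<in> D" for z
    using that block_subset[OF D] unfolding swap_map_def by auto
  then show "swap_map D E \<alpha> \<beta> ` D = \<alpha> ` D" by (rule image_cong[OF refl])
  have "swap_map D E \<alpha> \<beta> z = \<beta> z" if "z \<in> E" for z
    using that DE block_subset[OF E(1)] unfolding swap_map_def by auto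
  then show "swap_map D E \<alpha> \<beta> ` E = \<beta> ` E" by (rule image_cong[OF refl])
  assume C: "C \<in> P" "C \<noteq> D" "C \<noteq> E"
  then have "C \<inter> D = {}" "C \<inter> E = {}" using block_eqI[OF C(1)] D E(1) by blast+
  then have "swap_map D E \<alpha> \<beta> z = id z" if "z \<in> C" for z
    using that block_subset[OF C(1)] unfolding swap_map_def by auto
  then have "swap_map D E \<alpha> \<beta> ` C = id ` C" by (rule image_cong[OF refl])
  then show "swap_map D E \<alpha> \<beta> ` C = C" by simp
qed

lemma swap_map_image_subset:
  assumes D: "D \<in> P" and E: "E \<in> P" "D \<noteq> E" and \<alpha>: "\<alpha> ` D \<subseteq> E" and \<beta>: "\<beta> ` E \<subseteq> D"
    and Q: "Q \<in> P"
  shows "swap_map D E \<alpha> \<beta> ` Q \<subseteq> transpose D E Q"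
  using swap_map_image[OF D E] \<alpha> \<beta> Q E(2) by (cases "Q = D"; cases "Q = E") auto

lemma swap_map_Sigma_map:
  assumes D: "D \<in> P" and E: "E \<in> P" "D \<noteq> E" and \<alpha>: "\<alpha> ` D \<subseteq> E" and \<beta>: "\<beta> ` E \<subseteq> D"
  shows "swap_map D E \<alpha> \<beta> \<in> Sigma_map X P"
proof (rule Sigma_mapI)
  show "swap_map D E \<alpha> \<beta> \<in> X \<rightarrow>\<^sub>E X"
    using \<alpha> \<beta> block_subset[OF D] block_subset[OF E(1)] unfolding swap_map_def by (auto simp: PiE_iff)
  show "bij_betw (transpose D E) P P" using D E(1) by simp
qed (rule swap_map_image_subset[OF assms])

lemma block_map_swap_map:
  assumes D: "D \<in> P" and E: "E \<in> P" "D \<noteq> E" and \<alpha>: "\<alpha> ` D \<subseteq> E" and \<beta>: "\<beta> ` E \<subseteq> D"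
    and Q: "Q \<in> P"
  shows "block_map (swap_map D E \<alpha> \<beta>) Q = transpose D E Q"
  using block_map_eqI[OF Sigma_map_T_map[OF swap_map_Sigma_map[OF assms(1-5)]] Q]
    swap_map_image_subset[OF assms] D E(1) Q by (simp add: transpose_def)

lemma collapse_Sigma_map:
  assumes "B \<in> P" "x \<in> B" "y \<in> B"
  shows "collapse x y \<in> Sigma_map X P"
proof (rule Sigma_mapI)
  show "collapse x y \<in> X \<rightarrow>\<^sub>E X" using assms block_subset unfolding collapse_def by (auto simp: PiE_iff)
  show "bij_betw id P P" by simp
  show "collapse x y ` Q \<subseteq> id Q" if "Q \<in> P" for Q
    using that assms block_eqI[OF that assms(1)] block_subset[OF that] unfolding collapse_def by auto
qed

lemma Sigma_map_inj_on_Diff: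
  assumes f: "f \<in> Sigma_map X P" and inj: "\<And>Q. Q \<in> P \<Longrightarrow> inj_on f (Q - V)"
  shows "inj_on f (X - V)"
proof (rule inj_onI)
  fix z1 z2 assume z: "z1 \<in> X - V" "z2 \<in> X - V" "f z1 = f z2"
  then have "block_of z1 = block_of z2" using Sigma_map_reflects_block[OF f] by simp
  then have "z1 \<in> block_of z1 - V" "z2 \<in> block_of z1 - V" using z in_block_of by auto
  then show "z1 = z2" using inj[OF block_of_in_P] z by (meson DiffD1 inj_onD)
qed

lemma compose_swap_map:
  assumes D: "D \<in> P" and E: "E \<in> P" "D \<noteq> E" and \<alpha>: "\<alpha> ` D \<subseteq> E" and \<beta>: "\<beta> ` E \<subseteq> D"
    and z: "z \<in> X"
  shows "compose X (swap_map D E \<alpha>' \<beta>') (swap_map D E \<alpha> \<beta>) z =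
    (if z \<in> D then \<beta>' (\<alpha> z) else if z \<in> E then \<alpha>' (\<beta> z) else z)"
proof -
  have "D \<inter> E = {}" using block_eqI[OF D E(1)] E(2) by blast
  then show ?thesis
    using z \<alpha> \<beta> block_subset[OF D] block_subset[OF E(1)] unfolding swap_map_def
    by (auto simp: compose_eq)
qed

lemma block_fixing_inj_S_map:
  assumes f: "f \<in> X \<rightarrow>\<^sub>E X" "\<And>Q. Q \<in> P \<Longrightarrow> f ` Q \<subseteq> Q" and inj: "inj_on f X"
  shows "f \<in> S_map X P"
proof (rule S_mapI[OF f(1)])
  show "bij_betw f X X" using endo_inj_surj[OF finite_X _ inj] f(1) by (auto simp: bij_betw_def inj)
  show "f ` R \<in> P" if R: "R \<in> P" for R
    using endo_inj_surj[OF finite_block[OF R] f(2)[OF R] inj_on_subset[OF inj block_subset[OF R]]] R by simp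
qed

text \<open>If f identifies x and y in the block Q, it misses some point z of Q; then f2 is f with y
  redirected to z.\<close>

lemma block_fixing_collapse_factor:
  assumes f: "f \<in> X \<rightarrow>\<^sub>E X" "\<And>Q. Q \<in> P \<Longrightarrow> f ` Q \<subseteq> Q" and not_inj: "\<not> inj_on f X"
  obtains f2 Q x y where "f2 \<in> X \<rightarrow>\<^sub>E X" "\<And>Q. Q \<in> P \<Longrightarrow> f2 ` Q \<subseteq> Q"
    "card (f ` X) < card (f2 ` X)" "Q \<in> P" "x \<in> Q" "y \<in> Q" "x \<noteq> y"
    "compose X f2 (collapse x y) = f"
proof -
  have f_block: "f z \<in> block_of z" if "z \<in> X" for z
    using f(2)[OF block_of_in_P[OF that]] in_block_of[OF that] by blast
  obtain x y where xy: "x \<in> X" "y \<in> X" "x \<noteq> y" "f x = f y" using not_inj unfolding inj_on_def by blast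
  define Q where "Q = block_of x"
  have Q: "Q \<in> P" "x \<in> Q" unfolding Q_def using xy block_of_in_P in_block_of by auto
  have "f y \<in> block_of y" "f y \<in> Q" using f_block[OF xy(2)] f_block[OF xy(1)] xy(4) Q_def by auto
  then have y: "y \<in> Q" using block_eqI[OF block_of_in_P[OF xy(2)] Q(1)] in_block_of[OF xy(2)] by auto
  have "\<not> inj_on f Q" using xy Q y unfolding inj_on_def by blast
  then have "card (f ` Q) < card Q"
    using card_image_le[OF finite_block[OF Q(1)], of f] inj_on_iff_eq_card[OF finite_block[OF Q(1)], of f]
    by linarith
  then obtain z where z: "z \<in> Q" "z \<notin> f ` Q" using f(2)[OF Q(1)] by (metis less_irrefl subsetI subset_antisym)
  have zX: "z \<in> X" using z Q block_subset by blast
  have z_new: "z \<notin> f ` X"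
  proof
    assume "z \<in> f ` X"
    then obtain w where w: "w \<in> X" "z = f w" by blast
    then have "block_of w = Q" using block_eqI[OF block_of_in_P[OF w(1)] Q(1)] f_block z(1) by blast
    then show False using w z in_block_of by blast
  qed
  define f2 where "f2 = f(y := z)"
  have "f2 \<in> X \<rightarrow>\<^sub>E X" using f(1) zX xy(2) unfolding f2_def by (auto simp: PiE_iff extensional_def)
  moreover have "f2 ` R \<subseteq> R" if R: "R \<in> P" for R
    using f(2)[OF R] block_eqI[OF R Q(1)] y z(1) unfolding f2_def by auto
  moreover have "card (f ` X) < card (f2 ` X)"
  proof -
    have "f ` (X - {y}) = f ` X" using xy by (auto simp: image_iff) (metis DiffI singletonD)
    then have "f2 ` X = insert z (f ` X)" using xy(2) unfolding f2_def by auto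
    then show ?thesis using z_new finite_X by simp
  qed
  moreover have "compose X f2 (collapse x y) = f"
    using xy f(1) unfolding f2_def collapse_def by (intro extensionalityI) (auto simp: compose_eq PiE_iff)
  ultimately show ?thesis using that Q y xy(3) by blast
qed

definition size_defect :: "('a \<Rightarrow> 'a) \<Rightarrow> int" where
  "size_defect f = (\<Sum>Q\<in>P. (int (card (block_map f Q)) - int (card Q))\<^sup>2)"

lemma size_defect_exchange_less:
  assumes QR: "Q \<in> P" "R \<in> P" "card Q < card R" "card (block_map f R) < card (block_map f Q)"
    and swapped: "block_map g Q = block_map f R" "block_map g R = block_map f Q"
    and same: "\<And>Z. Z \<in> P \<Longrightarrow> Z \<noteq> Q \<Longrightarrow> Z \<noteq> R \<Longrightarrow> block_map g Z = block_map f Z"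
  shows "size_defect g < size_defect f"
proof -
  define \<delta> where "\<delta> h Z = (int (card (block_map h Z)) - int (card Z))\<^sup>2" for h Z
  have "Q \<noteq> R" using QR(3) by auto
  then have split: "size_defect h = \<delta> h Q + \<delta> h R + sum (\<delta> h) (P - {Q, R})" for h
    unfolding size_defect_def \<delta>_def by (rule sum_remove2[OF finite_P QR(1,2)])
  have "sum (\<delta> g) (P - {Q, R}) = sum (\<delta> f) (P - {Q, R})"
    unfolding \<delta>_def using same by (intro sum.cong) auto
  moreover have "\<delta> g Q + \<delta> g R < \<delta> f Q + \<delta> f R"
    using sum_squares_exchange_less[of "int (card (block_map f R))" "int (card (block_map f Q))"
        "int (card Q)" "int (card R)"] QR(3,4)
    unfolding \<delta>_def swapped by simp
  ultimately show ?thesis using split[of f] split[of g] by simp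
qed

end

section \<open>Generating Sigma(X, P)\<close>

locale block_partition_generators = block_partition +
  fixes Gen :: "('a \<Rightarrow> 'a) set"
  assumes S_map_subset_Gen: "S_map X P \<subseteq> Gen"
    and Gen_subset_Sigma_map: "Gen \<subseteq> Sigma_map X P"
    and B_set_Gen: "\<And>i. 1 \<le> i \<Longrightarrow> i \<le> num_sizes P - 1 \<Longrightarrow> Gen \<inter> B_set X P i \<noteq> {}"
    and C_set_Gen: "\<And>i. i \<in> collapse_indices P \<Longrightarrow> Gen \<inter> C_set X P i \<noteq> {}"
begin

lemma sgen_subset_Sigma_map: "sgen X Gen \<subseteq> Sigma_map X P"
proof
  fix f assume "f \<in> sgen X Gen"
  then show "f \<in> Sigma_map X P"
    by induction (use Gen_subset_Sigma_map compose_Sigma_map in blast)+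
qed

lemma S_map_in_sgen: "s \<in> S_map X P \<Longrightarrow> s \<in> sgen X Gen"
  using S_map_subset_Gen by (blast intro: sgen.gen)

lemma in_sgen_if_same_kernel:
  assumes h: "h \<in> sgen X Gen" and f: "f \<in> Sigma_map X P"
    and kernel: "\<And>Q z1 z2. Q \<in> P \<Longrightarrow> z1 \<in> Q \<Longrightarrow> z2 \<in> Q \<Longrightarrow> h z1 = h z2 \<longleftrightarrow> f z1 = f z2"
    and size: "\<And>Q. Q \<in> P \<Longrightarrow> card (block_map h Q) = card (block_map f Q)"
  shows "f \<in> sgen X Gen"
proof (rule S_map_factor_same_kernel[OF subsetD[OF sgen_subset_Sigma_map h] f])
  show "h z1 = h z2 \<longleftrightarrow> f z1 = f z2" if "Q \<in> P" "z1 \<in> Q" "z2 \<in> Q" for Q z1 z2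
    using kernel that .
  show "card (block_map h Q) = card (block_map f Q)" if "Q \<in> P" for Q
    using size that .
  show "f \<in> sgen X Gen" if "\<sigma> \<in> S_map X P" "compose X \<sigma> h = f" for \<sigma>
    using S_map_in_sgen[OF that(1)] h sgen.comp that(2) by metis
qed

lemma B_set_transport:
  assumes i: "1 \<le> i" "i \<le> num_sizes P - 1"
    and D: "D \<in> P" "card D = lsize P i" and E: "E \<in> P" "card E = lsize P (i + 1)"
    and DE: "card D < card E"
  obtains h E' D' where "h \<in> sgen X Gen" "inj_on h D" "E' \<in> P" "card E' = card E" "h ` D \<subseteq> E'"
    "D' \<in> P" "card D' = card D" "h ` E = D'"
    "\<forall>Q\<in>P - {D, E}. \<exists>R\<in>P. card R = card Q \<and> bij_betw h Q R"
proof -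
  obtain b where b: "b \<in> Gen" "b \<in> B_set X P i" using B_set_Gen[OF i] by blast
  then obtain Pj Pj' Pk Pk' where P: "Pj \<in> P" "Pj' \<in> P" "Pk \<in> P" "Pk' \<in> P"
    and card: "card Pj = card D" "card Pj' = card D" "card Pk = card E" "card Pk' = card E"
    and b_special: "inj_on b Pj" "b ` Pj \<subseteq> Pk" "b ` Pk' = Pj'"
    and b_other: "\<forall>Q\<in>P - {Pj, Pk'}. \<exists>R\<in>P. card R = card Q \<and> bij_betw b Q R"
    unfolding B_set_def using D(2) E(2) by auto
  have ne: "Pj \<noteq> E" "Pj \<noteq> Pk'" "D \<noteq> E" "D \<noteq> Pk'" using card DE by auto
  define \<psi> where "\<psi> = transpose E Pk' \<circ> transpose D Pj"
  have \<psi>: "bij_betw \<psi> P P" unfolding \<psi>_def by (rule bij_betw_trans[of _ _ P]) (simp_all add: P D(1) E(1))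
  have card_\<psi>: "card (\<psi> R) = card R" for R unfolding \<psi>_def using card by (simp add: card_transpose)
  have \<psi>_D: "\<psi> D = Pj" and \<psi>_E: "\<psi> E = Pk'" unfolding \<psi>_def using ne by (simp_all add: transpose_def)
  obtain \<tau> where \<tau>: "\<tau> \<in> S_map X P" "\<And>R. R \<in> P \<Longrightarrow> \<tau> ` R = \<psi> R"
    using S_map_extend[OF \<psi> card_\<psi>, of "{}"] by auto
  have inj_\<tau>: "inj_on \<tau> Q" if "Q \<in> P" for Q
    using bij_betw_imp_inj_on[OF S_map_bij_betw[OF \<tau>(1)]] block_subset[OF that] by (rule inj_on_subset)
  define h where "h = compose X b \<tau>"
  have h_G: "h \<in> sgen X Gen" unfolding h_def using b(1) S_map_in_sgen[OF \<tau>(1)] by (blast intro: sgen.intros)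
  have h_on: "h z = (b \<circ> \<tau>) z" if "Q \<in> P" "z \<in> Q" for Q z
    using that block_subset[OF that(1)] unfolding h_def by (auto simp: compose_eq)
  have h_img: "h ` Q = b ` \<psi> Q" if "Q \<in> P" for Q
  proof -
    have "h ` Q = (b \<circ> \<tau>) ` Q" using h_on[OF that] by (rule image_cong[OF refl])
    also have "\<dots> = b ` \<psi> Q" using \<tau>(2)[OF that] image_comp by metis
    finally show ?thesis .
  qed
  have h_inj: "inj_on h Q" if "Q \<in> P" "inj_on b (\<psi> Q)" for Q
  proof -
    have "inj_on (b \<circ> \<tau>) Q"
      using comp_inj_on[OF inj_\<tau>[OF that(1)]] \<tau>(2)[OF that(1)] that(2) by simp
    then show ?thesis using h_on[OF that(1)] by (simp cong: inj_on_cong)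
  qed
  have h_D: "inj_on h D" "h ` D \<subseteq> Pk"
    using h_inj[OF D(1)] h_img[OF D(1)] \<psi>_D b_special by auto
  have h_E: "h ` E = Pj'" using h_img[OF E(1)] \<psi>_E b_special(3) by simp
  have h_other: "\<forall>Q\<in>P - {D, E}. \<exists>R\<in>P. card R = card Q \<and> bij_betw h Q R"
  proof (intro ballI)
    fix Q assume "Q \<in> P - {D, E}"
    then have Q: "Q \<in> P" "Q \<noteq> D" "Q \<noteq> E" by auto
    have "\<psi> Q \<noteq> Pj" "\<psi> Q \<noteq> Pk'"
      using inj_on_contraD[OF bij_betw_imp_inj_on[OF \<psi>]] Q D(1) E(1) \<psi>_D \<psi>_E by metis+
    then obtain R where R: "R \<in> P" "card R = card (\<psi> Q)" "bij_betw b (\<psi> Q) R"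
      using b_other bij_betw_apply[OF \<psi> Q(1)] by blast
    then have "bij_betw h Q R" using h_inj[OF Q(1)] h_img[OF Q(1)] unfolding bij_betw_def by simp
    then show "\<exists>R\<in>P. card R = card Q \<and> bij_betw h Q R" using R(1,2) card_\<psi> by metis
  qed
  show ?thesis
    using that[OF h_G h_D(1) P(3) card(3) h_D(2) P(2) card(2) h_E h_other] by blast
qed

lemma swap_map_in_sgen:
  assumes D: "D \<in> P" and E: "E \<in> P" and DE: "card D < card E"
    and adjacent: "\<And>Z. Z \<in> P \<Longrightarrow> \<not> (card D < card Z \<and> card Z < card E)"
    and \<alpha>: "inj_on \<alpha> D" "\<alpha> ` D \<subseteq> E"
  obtains \<beta> where "\<beta> ` E = D" "swap_map D E \<alpha> \<beta> \<in> sgen X Gen"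
proof -
  obtain i where i: "1 \<le> i" "i \<le> num_sizes P - 1" "lsize P i = card D" "lsize P (i + 1) = card E"
    by (rule lsize_adjacent[OF finite_P D E DE adjacent])
  obtain h E' D' where h: "h \<in> sgen X Gen" "inj_on h D" "E' \<in> P" "card E' = card E" "h ` D \<subseteq> E'"
    "D' \<in> P" "card D' = card D" "h ` E = D'"
    and h_other: "\<forall>Q\<in>P - {D, E}. \<exists>R\<in>P. card R = card Q \<and> bij_betw h Q R"
    using B_set_transport[OF i(1,2) D i(3)[symmetric] E i(4)[symmetric] DE] by blast
  have hT: "h \<in> T_map X P" using h(1) sgen_subset_Sigma_map Sigma_map_T_map by blast
  obtain \<pi> where \<pi>: "bij_betw \<pi> D' D"
    using finite_same_card_bij[OF finite_block[OF h(6)] finite_block[OF D]] h(7) by blast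
  define \<beta> where "\<beta> = \<pi> \<circ> h"
  have \<beta>: "\<beta> ` E = D" unfolding \<beta>_def image_comp[symmetric] h(8) using \<pi> by (simp add: bij_betw_def)
  have DE_disj: "D \<inter> E = {}" "D \<noteq> E" using block_eqI[OF D E] DE by auto
  define f where "f = swap_map D E \<alpha> \<beta>"
  have f: "f \<in> Sigma_map X P"
    unfolding f_def using D E DE_disj(2) \<alpha>(2) \<beta> by (simp add: swap_map_Sigma_map)
  have f_D: "f z = \<alpha> z" if "z \<in> D" for z
    using that block_subset[OF D] unfolding f_def swap_map_def by auto
  have f_E: "f z = \<pi> (h z)" if "z \<in> E" for z
    using that DE_disj block_subset[OF E] unfolding f_def swap_map_def \<beta>_def by auto
  have f_other: "f z = z" if "Q \<in> P" "Q \<noteq> D" "Q \<noteq> E" "z \<in> Q" for Q z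
    using that block_eqI[OF that(1) D] block_eqI[OF that(1) E] block_subset[OF that(1)]
    unfolding f_def swap_map_def by auto
  have inj_\<pi>: "inj_on \<pi> D'" using \<pi> by (rule bij_betw_imp_inj_on)
  have "f \<in> sgen X Gen"
  proof (rule in_sgen_if_same_kernel[OF h(1) f])
    fix Q z1 z2 assume Q: "Q \<in> P" and z: "z1 \<in> Q" "z2 \<in> Q"
    consider "Q = D" | "Q = E" | "Q \<noteq> D" "Q \<noteq> E" by blast
    then show "h z1 = h z2 \<longleftrightarrow> f z1 = f z2"
    proof cases
      case 1
      then show ?thesis using z f_D h(2) \<alpha>(1) by (simp add: inj_on_eq_iff)
    next
      case 2
      then have "h z1 \<in> D'" "h z2 \<in> D'" using z h(8) by auto
      then show ?thesis using 2 z f_E inj_\<pi> by (simp add: inj_on_eq_iff)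
    next
      case 3
      then obtain R where "bij_betw h Q R" using h_other Q by blast
      then have "inj_on h Q" by (rule bij_betw_imp_inj_on)
      then show ?thesis using 3 z f_other[OF Q] by (simp add: inj_on_eq_iff)
    qed
  next
    fix Q assume Q: "Q \<in> P"
    have f_Q: "block_map f Q = transpose D E Q"
      unfolding f_def using block_map_swap_map[OF D E DE_disj(2) \<alpha>(2) _ Q] \<beta> by simp
    consider "Q = D" | "Q = E" | "Q \<noteq> D" "Q \<noteq> E" by blast
    then show "card (block_map h Q) = card (block_map f Q)"
    proof cases
      case 1
      then show ?thesis using f_Q block_map_eqI[OF hT D h(3) h(5)] h(4) by simp
    next
      case 2
      then show ?thesis using f_Q block_map_eqI[OF hT E h(6)] h(7,8) by simp
    next
      case 3
      then obtain R where R: "R \<in> P" "card R = card Q" "bij_betw h Q R" using h_other Q by blast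
      then show ?thesis using 3 f_Q block_map_eqI[OF hT Q R(1)] by (simp add: bij_betw_def)
    qed
  qed
  then show ?thesis using that[OF \<beta>] unfolding f_def by blast
qed

lemma collapse_in_sgen_of_defect_one:
  assumes k: "k \<in> sgen X Gen" and k_size: "\<And>Q. Q \<in> P \<Longrightarrow> card (block_map k Q) = card Q"
    and uv: "u \<in> X" "v \<in> X" "u \<noteq> v" "k u = k v" "inj_on k (X - {v})"
    and B: "B \<in> P" "x \<in> B" "y \<in> B" "x \<noteq> y" "card B = card (block_of u)"
  shows "collapse x y \<in> sgen X Gen"
proof -
  have kS: "k \<in> Sigma_map X P" using k sgen_subset_Sigma_map by blast
  define B0 where "B0 = block_of u"
  have B0: "B0 \<in> P" "u \<in> B0" unfolding B0_def using uv(1) block_of_in_P in_block_of by auto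
  have "v \<in> B0" using Sigma_map_reflects_block[OF kS uv(1,2)] uv(4) in_block_of[OF uv(2)]
    unfolding B0_def by simp
  define \<psi> where "\<psi> = transpose B B0"
  have \<psi>: "bij_betw \<psi> P P" unfolding \<psi>_def using B(1) B0(1) by simp
  have card_\<psi>: "card (\<psi> R) = card R" for R unfolding \<psi>_def using B(5) B0_def card_transpose by metis
  define \<rho> where "\<rho> w = (if w = x then u else v)" for w
  have "{x, y} \<subseteq> X" using B block_subset by blast
  moreover have "inj_on \<rho> {x, y}" unfolding \<rho>_def using B(4) uv(3) by (simp add: inj_on_def)
  moreover have "\<rho> a \<in> \<psi> (block_of a)" if "a \<in> {x, y}" for a
    using that B block_of_eq B0 \<open>v \<in> B0\<close> unfolding \<rho>_def \<psi>_def by auto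
  ultimately obtain \<tau> where \<tau>: "\<tau> \<in> S_map X P" "\<And>a. a \<in> {x, y} \<Longrightarrow> \<tau> a = \<rho> a"
    "\<And>R. R \<in> P \<Longrightarrow> \<tau> ` R = \<psi> R"
    using S_map_extend[OF \<psi> card_\<psi>] by metis
  have \<tau>_xy: "\<tau> x = u" "\<tau> y = v" using \<tau>(2) B(4) unfolding \<rho>_def by auto
  have \<tau>_bij: "bij_betw \<tau> X X" using \<tau>(1) by (rule S_map_bij_betw)
  have \<tau>S: "\<tau> \<in> Sigma_map X P" using \<tau>(1) by (rule S_map_Sigma_map)
  define h where "h = compose X k \<tau>"
  have h: "h \<in> sgen X Gen" unfolding h_def using k S_map_in_sgen[OF \<tau>(1)] by (blast intro: sgen.intros)
  have f: "collapse x y \<in> Sigma_map X P" using collapse_Sigma_map B(1-3) .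
  have xy_X: "x \<in> X" "y \<in> X" using \<open>{x, y} \<subseteq> X\<close> by auto
  show ?thesis
  proof (rule in_sgen_if_same_kernel[OF h f])
    fix Q z1 z2 assume Q: "Q \<in> P" and z: "z1 \<in> Q" "z2 \<in> Q"
    then have zX: "z1 \<in> X" "z2 \<in> X" using block_subset by auto
    have "\<tau> z1 = \<tau> z2 \<longleftrightarrow> z1 = z2" "\<tau> z1 \<in> X" "\<tau> z2 \<in> X"
      using \<tau>_bij zX by (auto simp: bij_betw_def inj_on_eq_iff)
    moreover have "{\<tau> z1, \<tau> z2} = {u, v} \<longleftrightarrow> {z1, z2} = {x, y}"
      using \<tau>_bij zX xy_X \<tau>_xy uv(3) B(4)
      by (auto simp: doubleton_eq_iff bij_betw_def inj_on_eq_iff)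
    ultimately have "h z1 = h z2 \<longleftrightarrow> z1 = z2 \<or> {z1, z2} = {x, y}"
      using inj_on_Diff_singleton_eq_iff[OF uv(5,1,2,3,4)] zX unfolding h_def by (simp add: compose_eq)
    moreover have "collapse x y z1 = collapse x y z2 \<longleftrightarrow> z1 = z2 \<or> {z1, z2} = {x, y}"
      using zX B(4) unfolding collapse_def by (auto simp: doubleton_eq_iff)
    ultimately show "h z1 = h z2 \<longleftrightarrow> collapse x y z1 = collapse x y z2" by simp
  next
    fix Q assume Q: "Q \<in> P"
    have "block_map \<tau> Q = \<psi> Q"
      using block_map_eqI[OF Sigma_map_T_map[OF \<tau>S] Q bij_betw_apply[OF \<psi> Q]] \<tau>(3)[OF Q] by simp
    then have "card (block_map h Q) = card Q"
      using block_map_compose[OF kS \<tau>S Q] k_size[OF bij_betw_apply[OF \<psi> Q]] card_\<psi>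
      unfolding h_def by simp
    moreover have "block_map (collapse x y) Q = Q"
      using block_map_eqI[OF Sigma_map_T_map[OF f] Q Q] B(1-3) block_eqI[OF Q B(1)] block_subset[OF Q]
      unfolding collapse_def by auto
    ultimately show "card (block_map h Q) = card (block_map (collapse x y) Q)" by simp
  qed
qed

lemma collapse_in_sgen_gap:
  assumes B: "B \<in> P" "x \<in> B" "y \<in> B" "x \<noteq> y"
    and gap: "\<And>Z. Z \<in> P \<Longrightarrow> card Z \<noteq> card B - 1"
  shows "collapse x y \<in> sgen X Gen"
proof -
  have "card {x, y} \<le> card B" using B finite_block by (intro card_mono) auto
  then have two: "card B \<ge> 2" using B(4) by simp
  obtain i where i: "i \<in> collapse_indices P" "lsize P i = card B"
    using collapse_indices_witness[OF finite_P B(1) two gap] by blast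
  obtain c where c: "c \<in> Gen" "c \<in> C_set X P i" using C_set_Gen[OF i(1)] by blast
  then obtain B0 where cS: "c \<in> Sigma_map X P"
    and c_size: "\<forall>Q\<in>P. \<exists>R\<in>P. card R = card Q \<and> c ` Q \<subseteq> R"
    and B0: "B0 \<in> P" "card B0 = card B" "card (c ` B0) = card B - 1" "\<forall>Q\<in>P - {B0}. inj_on c Q"
    unfolding C_set_def using i(2) by auto
  obtain v u where vu: "v \<in> B0" "u \<in> B0" "v \<noteq> u" "c v = c u"
    using card_image_lessE[OF finite_block[OF B0(1)], of c] B0(2,3) two by auto
  have "inj_on c (B0 - {v})"
    using inj_on_Diff_collision[OF finite_block[OF B0(1)] _ vu] B0(2,3) by simp
  then have "inj_on c (Q - {v})" if "Q \<in> P" for Q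
    using B0(4) that by (cases "Q = B0") (auto intro: inj_on_subset)
  then have inj: "inj_on c (X - {v})" by (rule Sigma_map_inj_on_Diff[OF cS])
  have "card (block_map c Q) = card Q" if Q: "Q \<in> P" for Q
  proof -
    obtain R where "R \<in> P" "card R = card Q" "c ` Q \<subseteq> R" using c_size Q by blast
    then show ?thesis using block_map_eqI[OF Sigma_map_T_map[OF cS] Q] by simp
  qed
  moreover have "u \<in> X" "v \<in> X" using vu B0(1) block_subset by auto
  moreover have "card B = card (block_of u)" using block_of_eq[OF B0(1) vu(2)] B0(2) by simp
  ultimately show ?thesis
    using collapse_in_sgen_of_defect_one[OF sgen.gen[OF c(1)]] vu(3,4) inj B by metis
qed

lemma swap_map_collapsing_in_sgen:
  assumes D: "D \<in> P" and B: "B \<in> P" "card D = card B - 1" and \<alpha>: "inj_on \<alpha> D" "\<alpha> ` D \<subseteq> B"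
  obtains \<beta> u v where "swap_map D B \<alpha> \<beta> \<in> sgen X Gen" "\<beta> ` B = D"
    "u \<in> B" "v \<in> B" "u \<noteq> v" "\<beta> u = \<beta> v" "inj_on \<beta> (B - {v})"
proof -
  have "card D \<noteq> 0" using block_nonempty[OF D] finite_block[OF D] by simp
  then have lt: "card D < card B" using B(2) by simp
  have "\<And>Z. \<not> (card D < card Z \<and> card Z < card B)" using B(2) by auto
  then obtain \<beta> where \<beta>: "\<beta> ` B = D" "swap_map D B \<alpha> \<beta> \<in> sgen X Gen"
    using swap_map_in_sgen[OF D B(1) lt _ \<alpha>] by blast
  then obtain v u where vu: "v \<in> B" "u \<in> B" "v \<noteq> u" "\<beta> v = \<beta> u"
    using card_image_lessE[OF finite_block[OF B(1)]] lt by metis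
  then have "inj_on \<beta> (B - {v})"
    using inj_on_Diff_collision[OF finite_block[OF B(1)] _ vu] \<beta>(1) B(2) by simp
  then show ?thesis using that \<beta> vu by (metis (no_types))
qed

text \<open>Composing two swaps between a block B and a block D of the next smaller size gives a map that
  fixes every block and identifies exactly one pair of points of B: the first swap is chosen to map D
  into the part of B on which the second one is injective.\<close>

lemma defect_one_in_sgen_adjacent:
  assumes B: "B \<in> P" and D: "D \<in> P" "card D = card B - 1"
  obtains k u v where "k \<in> sgen X Gen" "\<And>Q. Q \<in> P \<Longrightarrow> k ` Q \<subseteq> Q"
    "u \<in> B" "v \<in> B" "u \<noteq> v" "k u = k v" "inj_on k (X - {v})"
proof -
  have finB: "finite B" and finD: "finite D" using finite_block B D by auto
  have "card B \<noteq> 0" using block_nonempty[OF B] finB by simp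
  then have DB: "D \<noteq> B" using D(2) by auto
  obtain \<alpha>2 where \<alpha>2: "inj_on \<alpha>2 D" "\<alpha>2 ` D \<subseteq> B"
    using inj_on_image_superset[OF finD finB empty_subsetI] D(2) by (metis card.empty diff_le_self zero_le)
  obtain \<beta>2 p p' where t2: "swap_map D B \<alpha>2 \<beta>2 \<in> sgen X Gen" "\<beta>2 ` B = D"
    and p: "p' \<in> B" "p \<in> B" "p' \<noteq> p" "\<beta>2 p' = \<beta>2 p" "inj_on \<beta>2 (B - {p})"
    using swap_map_collapsing_in_sgen[OF D(1) B D(2) \<alpha>2] by blast
  have "card (B - {p}) = card D" using D(2) p(2) finB by simp
  then obtain \<alpha>1 where \<alpha>1: "bij_betw \<alpha>1 D (B - {p})"
    using finite_same_card_bij[OF finD] finB by (metis finite_Diff)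
  then have \<alpha>1': "inj_on \<alpha>1 D" "\<alpha>1 ` D \<subseteq> B" by (auto simp: bij_betw_def)
  obtain \<beta>1 u v where t1: "swap_map D B \<alpha>1 \<beta>1 \<in> sgen X Gen" "\<beta>1 ` B = D"
    and uv: "u \<in> B" "v \<in> B" "u \<noteq> v" "\<beta>1 u = \<beta>1 v" "inj_on \<beta>1 (B - {v})"
    using swap_map_collapsing_in_sgen[OF D(1) B D(2) \<alpha>1'] by blast
  define k where "k = compose X (swap_map D B \<alpha>2 \<beta>2) (swap_map D B \<alpha>1 \<beta>1)"
  have k_G: "k \<in> sgen X Gen" unfolding k_def using t2(1) t1(1) by (rule sgen.comp)
  have k: "k z = (if z \<in> D then \<beta>2 (\<alpha>1 z) else if z \<in> B then \<alpha>2 (\<beta>1 z) else z)" if "z \<in> X" for z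
    unfolding k_def using compose_swap_map[OF D(1) B DB \<alpha>1'(2) _ that] t1(2) by simp
  have k_D: "k z = \<beta>2 (\<alpha>1 z)" if "z \<in> D" for z using k that block_subset[OF D(1)] by auto
  have k_B: "k z = \<alpha>2 (\<beta>1 z)" if "z \<in> B" for z
  proof -
    have "z \<in> X" "z \<notin> D" using that block_subset[OF B] block_eqI[OF D(1) B _ that] DB by auto
    then show ?thesis using k that by simp
  qed
  have k_other: "k z = z" if "Q \<in> P" "Q \<noteq> D" "Q \<noteq> B" "z \<in> Q" for Q z
  proof -
    have "z \<in> X" "z \<notin> D" "z \<notin> B"
      using that block_eqI[OF that(1) D(1)] block_eqI[OF that(1) B] block_subset[OF that(1)] by auto
    then show ?thesis using k by simp
  qed
  have k_blocks: "k ` Q \<subseteq> Q" if "Q \<in> P" for Q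
  proof -
    consider "Q = D" | "Q = B" | "Q \<noteq> D" "Q \<noteq> B" by blast
    then show ?thesis
    proof cases
      case 1
      have "k z \<in> D" if "z \<in> D" for z
      proof -
        have "\<beta>2 (\<alpha>1 z) \<in> \<beta>2 ` B" using \<alpha>1'(2) that by blast
        then show ?thesis using k_D[OF that] t2(2) by simp
      qed
      then show ?thesis using 1 by blast
    next
      case 2
      have "k z \<in> B" if "z \<in> B" for z
      proof -
        have "\<beta>1 z \<in> \<beta>1 ` B" using that by blast
        then show ?thesis using k_B[OF that] t1(2) \<alpha>2(2) by auto
      qed
      then show ?thesis using 2 by blast
    qed (use k_other that in auto)
  qed
  have "inj_on k (Q - {v})" if "Q \<in> P" for Q
  proof -
    consider "Q = D" | "Q = B" | "Q \<noteq> D" "Q \<noteq> B" by blast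
    then show ?thesis
    proof cases
      case 1
      have "inj_on (\<beta>2 \<circ> \<alpha>1) D" using comp_inj_on[OF \<alpha>1'(1)] p(5) \<alpha>1 by (simp add: bij_betw_def)
      then show ?thesis using 1 k_D by (simp add: inj_on_def)
    next
      case 2
      have "inj_on (\<alpha>2 \<circ> \<beta>1) (B - {v})"
        using comp_inj_on[OF uv(5)] \<alpha>2(1) t1(2) inj_on_subset by (metis image_mono Diff_subset)
      then show ?thesis using 2 k_B by (simp add: inj_on_def)
    next
      case 3
      then show ?thesis using k_other[OF that] by (simp add: inj_on_def)
    qed
  qed
  then have "inj_on k (X - {v})"
    using Sigma_map_inj_on_Diff subsetD[OF sgen_subset_Sigma_map k_G] by blast
  moreover have "k u = k v" using k_B uv(1,2,4) by simp
  ultimately show ?thesis using that[OF k_G k_blocks uv(1-3)] by blast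
qed

lemma collapse_in_sgen:
  assumes B: "B \<in> P" "x \<in> B" "y \<in> B" "x \<noteq> y"
  shows "collapse x y \<in> sgen X Gen"
proof (cases "\<exists>D\<in>P. card D = card B - 1")
  case True
  then obtain D where D: "D \<in> P" "card D = card B - 1" by blast
  obtain k u v where k: "k \<in> sgen X Gen" "\<And>Q. Q \<in> P \<Longrightarrow> k ` Q \<subseteq> Q"
    and uv: "u \<in> B" "v \<in> B" "u \<noteq> v" "k u = k v" "inj_on k (X - {v})"
    using defect_one_in_sgen_adjacent[OF B(1) D] by metis
  have kT: "k \<in> T_map X P" using k(1) sgen_subset_Sigma_map Sigma_map_T_map by blast
  have "card (block_map k Q) = card Q" if "Q \<in> P" for Q using block_map_eqI[OF kT that that k(2)[OF that]] by simp
  moreover have "u \<in> X" "v \<in> X" using uv B(1) block_subset by auto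
  moreover have "card B = card (block_of u)" using block_of_eq[OF B(1) uv(1)] by simp
  ultimately show ?thesis using collapse_in_sgen_of_defect_one[OF k(1)] uv(3-5) B by metis
next
  case False
  then show ?thesis using collapse_in_sgen_gap[OF B] by blast
qed

lemma block_fixing_in_sgen:
  assumes "f \<in> X \<rightarrow>\<^sub>E X" "\<And>Q. Q \<in> P \<Longrightarrow> f ` Q \<subseteq> Q"
  shows "f \<in> sgen X Gen"
  using assms
proof (induction "card X - card (f ` X)" arbitrary: f rule: less_induct)
  case less
  show ?case
  proof (cases "inj_on f X")
    case True
    then show ?thesis using block_fixing_inj_S_map[OF less.prems] S_map_in_sgen by blast
  next
    case False
    then obtain f2 Q x y where f2: "f2 \<in> X \<rightarrow>\<^sub>E X" "\<And>Q. Q \<in> P \<Longrightarrow> f2 ` Q \<subseteq> Q"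
      "card (f ` X) < card (f2 ` X)" and xy: "Q \<in> P" "x \<in> Q" "y \<in> Q" "x \<noteq> y"
      and f: "compose X f2 (collapse x y) = f"
      using block_fixing_collapse_factor[OF less.prems] by metis
    have "card X - card (f2 ` X) < card X - card (f ` X)"
      using f2(3) card_image_le[OF finite_X, of f2] by linarith
    then have "f2 \<in> sgen X Gen" using less.hyps f2(1,2) by blast
    then show ?thesis using collapse_in_sgen[OF xy] f sgen.comp by metis
  qed
qed

lemma size_preserving_in_sgen:
  assumes f: "f \<in> Sigma_map X P" and size: "\<And>Q. Q \<in> P \<Longrightarrow> card (block_map f Q) = card Q"
  shows "f \<in> sgen X Gen"
proof -
  have fT: "f \<in> T_map X P" using f by (rule Sigma_map_T_map)
  obtain \<sigma> where \<sigma>: "\<sigma> \<in> S_map X P" "\<And>R. R \<in> P \<Longrightarrow> \<sigma> ` R = block_map f R"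
    using S_map_extend[OF bij_betw_block_map[OF f] size, of "{}"] by auto
  have "f ` Q \<subseteq> \<sigma> ` id Q" if "Q \<in> P" for Q using image_subset_block_map[OF fT that] \<sigma>(2)[OF that] by simp
  then obtain f' where f': "f' \<in> Sigma_map X P" "compose X \<sigma> f' = f" "\<And>Q. Q \<in> P \<Longrightarrow> f' ` Q \<subseteq> id Q"
    using Sigma_map_lift[OF f bij_betw_id] by metis
  have "f' \<in> X \<rightarrow>\<^sub>E X" using f'(1) unfolding Sigma_map_def T_map_def by blast
  then have "f' \<in> sgen X Gen" using block_fixing_in_sgen f'(3) by simp
  then show ?thesis using S_map_in_sgen[OF \<sigma>(1)] f'(2) sgen.comp by metis
qed

lemma swap_map_factor:
  assumes f: "f \<in> Sigma_map X P" and Q: "Q \<in> P" and R: "R \<in> P"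
    and DE: "card (block_map f R) < card (block_map f Q)"
    and adjacent: "\<And>Z. Z \<in> P \<Longrightarrow> \<not> (card (block_map f R) < card Z \<and> card Z < card (block_map f Q))"
    and small: "card Q \<le> card (block_map f R)"
  obtains t f' where "t \<in> sgen X Gen" "f' \<in> Sigma_map X P" "compose X t f' = f"
    "\<And>Z. Z \<in> P \<Longrightarrow> block_map f' Z = transpose (block_map f R) (block_map f Q) (block_map f Z)"
proof -
  have fT: "f \<in> T_map X P" using f by (rule Sigma_map_T_map)
  define \<phi> where "\<phi> = block_map f"
  define D where "D = \<phi> R"
  define E where "E = \<phi> Q"
  have \<phi>: "bij_betw \<phi> P P" unfolding \<phi>_def using f by (rule bij_betw_block_map)
  have D: "D \<in> P" and E: "E \<in> P" unfolding D_def E_def using \<phi> Q R by (auto intro: bij_betw_apply)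
  have DE': "card D < card E" "D \<noteq> E" using DE unfolding D_def E_def \<phi>_def by auto
  have fQ_E: "f ` Q \<subseteq> E" unfolding E_def \<phi>_def using image_subset_block_map[OF fT Q] .
  have fQ_card: "card (f ` Q) \<le> card D"
    using card_image_le[OF finite_block[OF Q], of f] small unfolding D_def \<phi>_def by linarith
  obtain \<alpha> where \<alpha>: "inj_on \<alpha> D" "\<alpha> ` D \<subseteq> E" "f ` Q \<subseteq> \<alpha> ` D"
    by (rule inj_on_image_superset[OF finite_block[OF D] finite_block[OF E] fQ_E fQ_card less_imp_le[OF DE'(1)]])
  have "\<not> (card D < card Z \<and> card Z < card E)" if "Z \<in> P" for Z
    using adjacent[OF that] unfolding D_def E_def \<phi>_def .
  then obtain \<beta> where \<beta>: "\<beta> ` E = D" "swap_map D E \<alpha> \<beta> \<in> sgen X Gen"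
    using swap_map_in_sgen[OF D E DE'(1) _ \<alpha>(1,2)] by blast
  define t where "t = swap_map D E \<alpha> \<beta>"
  define \<psi> where "\<psi> = transpose D E \<circ> \<phi>"
  have \<psi>: "bij_betw \<psi> P P" unfolding \<psi>_def using \<phi> by (rule bij_betw_trans) (simp add: D E)
  have "f ` Z \<subseteq> t ` \<psi> Z" if Z: "Z \<in> P" for Z
  proof -
    have f_Z: "f ` Z \<subseteq> \<phi> Z" unfolding \<phi>_def using image_subset_block_map[OF fT Z] .
    consider "Z = Q" | "Z = R" | "\<phi> Z \<noteq> D" "\<phi> Z \<noteq> E"
      using inj_on_contraD[OF bij_betw_imp_inj_on[OF \<phi>]] Q R Z unfolding D_def E_def by blast
    then show ?thesis
    proof cases
      case 1
      then show ?thesis using \<alpha>(3) swap_map_image(1)[OF D E DE'(2)] unfolding t_def \<psi>_def E_def by simp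
    next
      case 2
      then show ?thesis using \<beta>(1) swap_map_image(2)[OF D E DE'(2)] f_Z unfolding t_def \<psi>_def D_def by simp
    next
      case 3
      then show ?thesis
        using swap_map_image(3)[OF D E DE'(2) bij_betw_apply[OF \<phi> Z]] f_Z unfolding t_def \<psi>_def by simp
    qed
  qed
  then obtain f' where f': "f' \<in> Sigma_map X P" "compose X t f' = f" "\<And>Z. Z \<in> P \<Longrightarrow> f' ` Z \<subseteq> \<psi> Z"
    using Sigma_map_lift[OF f \<psi>] by metis
  have "block_map f' Z = \<psi> Z" if "Z \<in> P" for Z
    using block_map_eqI[OF Sigma_map_T_map[OF f'(1)] that bij_betw_apply[OF \<psi> that] f'(3)[OF that]] .
  then show ?thesis using that \<beta>(2) f'(1,2) unfolding t_def \<psi>_def D_def E_def \<phi>_def by simp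
qed

lemma size_defect_decrease:
  assumes f: "f \<in> Sigma_map X P" and moved: "\<exists>Q\<in>P. card (block_map f Q) \<noteq> card Q"
  obtains t f' where "t \<in> sgen X Gen" "f' \<in> Sigma_map X P" "compose X t f' = f"
    "size_defect f' < size_defect f"
proof -
  obtain Q R where QR: "Q \<in> P" "R \<in> P" "card Q < card R" "card Q \<le> card (block_map f R)"
    "card (block_map f R) < card (block_map f Q)"
    and adjacent: "\<And>Z. Z \<in> P \<Longrightarrow> \<not> (card (block_map f R) < card Z \<and> card Z < card (block_map f Q))"
    using bij_betw_adjacent_exchange[OF finite_P bij_betw_block_map[OF f] moved] by blast
  obtain t f' where t: "t \<in> sgen X Gen" "f' \<in> Sigma_map X P" "compose X t f' = f"
    and f': "\<And>Z. Z \<in> P \<Longrightarrow> block_map f' Z = transpose (block_map f R) (block_map f Q) (block_map f Z)"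
    using swap_map_factor[OF f QR(1,2,5) adjacent QR(4)] by blast
  have "size_defect f' < size_defect f"
  proof (rule size_defect_exchange_less[of Q R])
    show "block_map f' Z = block_map f Z" if "Z \<in> P" "Z \<noteq> Q" "Z \<noteq> R" for Z
      using f'[OF that(1)] inj_on_contraD[OF bij_betw_imp_inj_on[OF bij_betw_block_map[OF f]]] QR(1,2) that
      by simp
  qed (use QR f' in auto)
  then show ?thesis using that t by blast
qed

lemma Sigma_map_in_sgen: "f \<in> Sigma_map X P \<Longrightarrow> f \<in> sgen X Gen"
proof (induction "nat (size_defect f)" arbitrary: f rule: less_induct)
  case less
  show ?case
  proof (cases "\<exists>Q\<in>P. card (block_map f Q) \<noteq> card Q")
    case True
    then obtain t f' where "t \<in> sgen X Gen" "f' \<in> Sigma_map X P" "compose X t f' = f"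
      "size_defect f' < size_defect f"
      using size_defect_decrease[OF less.prems] by blast
    moreover have "0 \<le> size_defect f'" unfolding size_defect_def by (rule sum_nonneg) simp
    ultimately show ?thesis using less.hyps by (metis nat_less_eq_zless sgen.comp)
  next
    case False
    then show ?thesis using size_preserving_in_sgen[OF less.prems] by blast
  qed
qed

end

theorem theorem4p6:
  fixes X :: "'a set" and P :: "'a set set"
    and b c :: "nat \<Rightarrow> ('a \<Rightarrow> 'a)" and U :: "('a \<Rightarrow> 'a) set"
  assumes "finite X" and "X \<noteq> {}" and "partition_on X P"
    and "\<And>i. 1 \<le> i \<Longrightarrow> i \<le> num_sizes P - 1 \<Longrightarrow> b i \<in> B_set X P i"
    and "\<And>i. i \<in> {i. 1 \<le> i \<and> i \<le> num_sizes P \<and>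
               ((i = 1 \<and> lsize P 1 \<ge> 2) \<or> (i \<ge> 2 \<and> lsize P i - lsize P (i - 1) \<ge> 2))}
             \<Longrightarrow> c i \<in> C_set X P i"
    and "U = b ` {1..num_sizes P - 1} \<union>
             c ` {i. 1 \<le> i \<and> i \<le> num_sizes P \<and>
               ((i = 1 \<and> lsize P 1 \<ge> 2) \<or> (i \<ge> 2 \<and> lsize P i - lsize P (i - 1) \<ge> 2))}"
  shows "sgen X (S_map X P \<union> U) = Sigma_map X P"
proof -
  interpret block_partition X P using assms(1,3) by unfold_locales
  have U_eq: "U = b ` {1..num_sizes P - 1} \<union> c ` collapse_indices P"
    unfolding assms(6) collapse_indices_def ..
  have b: "b i \<in> U \<inter> B_set X P i" if "i \<in> {1..num_sizes P - 1}" for i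
    using assms(4) that unfolding U_eq by auto
  have c: "c i \<in> U \<inter> C_set X P i" if "i \<in> collapse_indices P" for i
    using assms(5) that unfolding U_eq collapse_indices_def by auto
  have "B_set X P i \<subseteq> Sigma_map X P" "C_set X P i \<subseteq> Sigma_map X P" for i
    unfolding B_set_def C_set_def by auto
  then have "U \<subseteq> Sigma_map X P" using b c unfolding U_eq by blast
  interpret block_partition_generators X P "S_map X P \<union> U"
  proof
    show "S_map X P \<union> U \<subseteq> Sigma_map X P" using S_map_Sigma_map \<open>U \<subseteq> Sigma_map X P\<close> by blast
    show "(S_map X P \<union> U) \<inter> B_set X P i \<noteq> {}" if "1 \<le> i" "i \<le> num_sizes P - 1" for i
      using b that by fastforce
    show "(S_map X P \<union> U) \<inter> C_set X P i \<noteq> {}" if "i \<in> collapse_indices P" for i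
      using c that by blast
  qed simp
  show ?thesis using sgen_subset_Sigma_map Sigma_map_in_sgen by blast
qed

end
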